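(* Let $G=G_{\mathbf E}$ be a multi-GGS group which is not the constant GGS group, and let $g\in G$ be directed along the ray $\overline 0$. Then $g\in B$.
   Context: Let $p$ be an odd prime and $X=\{0,1,\dots,p-1\}$, identified with $\mathbb F_p$. $X^*$ is the $p$-regular rooted tree of finite words over $X$; $\mathrm{Aut}(X^* )$ acts on the right. Sections $g|_v$ are defined by $(vw)^g=v^g\,w^{g|_v}$, and the label $g|^v\in\mathrm{Sym}(X)$ is the permutation by which $g|_v$ acts on one-letter words. $\mathrm{Stab}(1)$ is the stabiliser of all one-letter words and $\psi_1\colon\mathrm{Stab}(1)\to\mathrm{Aut}(X^* )^p$, $g\mapsto(g|_0,\dots,g|_{p-1})$, is an isomorphism. Let $a$ be the rooted automorphism acting as $\sigma=(0\,1\,\cdots\,p-1)$ on the first letter and trivially on the remaining letters. Let $\mathbf E\le\mathbb F_p^{p-1}$ be a subspace of dimension $r\ge1$; $E$ is the $r\times(p-1)$ matrix whose rows form a fixed basis of $\mathbf E$, with columns $\mathbf e_1,\dots,\mathbf e_{p-1}$. For $\mathbf n\in\mathbb F_p^r$, $b^{\mathbf n}\in\mathrm{Stab}(1)$ is the unique automorphism with $\psi_1(b^{\mathbf n})=(b^{\mathbf n},a^{\mathbf n\cdot\mathbf e_1},\dots,a^{\mathbf n\cdot\mathbf e_{p-1}})$; $B=\{b^{\mathbf n}\}$. $G=G_{\mathbf E}$ is generated by $a$ and $B$; it is the constant GGS group if $\mathbf E=\{(\lambda,\dots,\lambda)\mid\lambda\in\mathbb F_p\}$. The ray $\overline0$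 consists of the vertices $0^n$ ($n\ge0$). An automorphism $g$ is directed along $\overline 0$ if it fixes every vertex $0^n$ and $g|^v=\mathrm{id}$ for every vertex $v$ that is not joined by an edge to some vertex $0^n$. *)

theory Defs
  imports Main "HOL-Computational_Algebra.Primes"
begin

(* Vertices of the p-regular rooted tree X^* : words over X = {0..p-1},
   represented as nat lists all of whose letters are < p.
   Automorphisms are represented as functions on nat list (fixing words
   with letters >= p, which are not vertices). *)

definition word_over :: "nat \<Rightarrow> nat list \<Rightarrow> bool" where
  "word_over p v \<longleftrightarrow> (\<forall>x\<in>set v. x < p)"

fun rot :: "nat \<Rightarrow> nat \<Rightarrow> nat list \<Rightarrow> nat list" where
  "rot p k [] = []"
| "rot p k (x # w) = (if x < p then ((x + k) mod p) # w else x # w)"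

(* the automorphism with psi_1(b_u) = (b_u, a^(u 1), ..., a^(u (p-1))) *)
fun bgen :: "nat \<Rightarrow> (nat \<Rightarrow> nat) \<Rightarrow> nat list \<Rightarrow> nat list" where
  "bgen p u [] = []"
| "bgen p u (x # w) =
     (if x = 0 then 0 # bgen p u w
      else if x < p then x # rot p (u x) w
      else x # w)"

(* exponent vector (n . e_1, ..., n . e_{p-1}) for n in F_p^r, where E is the
   r x (p-1) matrix with entries Emat j i (row j < r, column i in {1..p-1}) *)
definition expvec :: "nat \<Rightarrow> nat \<Rightarrow> (nat \<Rightarrow> nat \<Rightarrow> nat) \<Rightarrow> (nat \<Rightarrow> nat) \<Rightarrow> nat \<Rightarrow> nat" where
  "expvec p r Emat n = (\<lambda>i. (\<Sum>j<r. n j * Emat j i) mod p)"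

definition coeffs :: "nat \<Rightarrow> nat \<Rightarrow> (nat \<Rightarrow> nat) set" where
  "coeffs p r = {n. (\<forall>j<r. n j < p) \<and> (\<forall>j\<ge>r. n j = 0)}"

definition Bset :: "nat \<Rightarrow> nat \<Rightarrow> (nat \<Rightarrow> nat \<Rightarrow> nat) \<Rightarrow> (nat list \<Rightarrow> nat list) set" where
  "Bset p r Emat = (\<lambda>n. bgen p (expvec p r Emat n)) ` coeffs p r"

definition basis_matrix :: "nat \<Rightarrow> nat \<Rightarrow> (nat \<Rightarrow> nat \<Rightarrow> nat) \<Rightarrow> bool" where
  "basis_matrix p r Emat \<longleftrightarrow>
     (\<forall>j<r. \<forall>i\<in>{1..p-1}. Emat j i < p) \<and>
     (\<forall>n\<in>coeffs p r. (\<forall>i\<in>{1..p-1}. expvec p r Emat n i = 0) \<longrightarrow> (\<forall>j<r. n j = 0))"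

definition rowspace :: "nat \<Rightarrow> nat \<Rightarrow> (nat \<Rightarrow> nat \<Rightarrow> nat) \<Rightarrow> (nat \<Rightarrow> nat) set" where
  "rowspace p r Emat = (\<lambda>n i. if i \<in> {1..p-1} then expvec p r Emat n i else 0) ` coeffs p r"

definition constspace :: "nat \<Rightarrow> (nat \<Rightarrow> nat) set" where
  "constspace p = (\<lambda>c i. if i \<in> {1..p-1} then c else 0) ` {..<p}"

inductive_set gen_group :: "('a \<Rightarrow> 'a) set \<Rightarrow> ('a \<Rightarrow> 'a) set" for S where
  gen_id: "id \<in> gen_group S"
| gen_base: "s \<in> S \<Longrightarrow> s \<in> gen_group S"
| gen_comp: "f \<in> gen_group S \<Longrightarrow> g \<in> gen_group S \<Longrightarrow> f \<circ> g \<in> gen_group S"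
| gen_inv: "f \<in> gen_group S \<Longrightarrow> inv f \<in> gen_group S"

definition GE :: "nat \<Rightarrow> nat \<Rightarrow> (nat \<Rightarrow> nat \<Rightarrow> nat) \<Rightarrow> (nat list \<Rightarrow> nat list) set" where
  "GE p r Emat = gen_group ({rot p 1} \<union> Bset p r Emat)"

definition tree_edge :: "nat \<Rightarrow> nat list \<Rightarrow> nat list \<Rightarrow> bool" where
  "tree_edge p v w \<longleftrightarrow> (\<exists>x<p. w = v @ [x]) \<or> (\<exists>x<p. v = w @ [x])"

(* the label g|^v is the identity: g|_v fixes every one-letter word *)
definition trivial_label :: "nat \<Rightarrow> (nat list \<Rightarrow> nat list) \<Rightarrow> nat list \<Rightarrow> bool" where
  "trivial_label p g v \<longleftrightarrow> (\<forall>x<p. g (v @ [x]) = g v @ [x])"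

definition directed0 :: "nat \<Rightarrow> (nat list \<Rightarrow> nat list) \<Rightarrow> bool" where
  "directed0 p g \<longleftrightarrow>
     (\<forall>n. g (replicate n 0) = replicate n 0) \<and>
     (\<forall>v. word_over p v \<longrightarrow> \<not> (\<exists>n. tree_edge p v (replicate n 0)) \<longrightarrow> trivial_label p g v)"

end

theory Submission
  imports Defs
begin

text \<open>
  Every element of \<open>G\<close> is the value of a word in \<open>a\<close> and the \<open>b\<^sup>n\<close>. The section of such a word
  at a first letter is again such a word; each \<open>b\<^sup>n\<close> of the word turns into \<open>b\<^sup>n\<close> in exactly one
  of the \<open>p\<close> sections and into a power of \<open>a\<close> in the others. Hence the total \<open>b\<close>-exponent
  \<open>N(w) \<in> F\<^sub>p\<^sup>r\<close> of a word is the sum of those of its sections, and since the rows of \<open>E\<close> are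
  independent, \<open>N(w) = 0\<close> whenever \<open>w\<close> represents a rooted automorphism. If the element is
  directed along \<open>0\<close>, its sections at \<open>x \<noteq> 0\<close> are rooted, so \<open>N\<close> of these sections vanishes,
  \<open>N(w)\<close> is \<open>N\<close> of the section at \<open>0\<close>, and the \<open>a\<close>-exponent of the section at \<open>x \<noteq> 0\<close> is
  \<open>N(w)\<cdot>e\<^sub>x\<close>. Descending along the ray shows that the element is \<open>b\<^sup>N\<close> with \<open>N = N(w)\<close>.
\<close>

lemma rot_rot: "rot p a (rot p b xs) = rot p (a + b) xs"
  by (cases xs) (auto simp: mod_add_right_eq ac_simps)

lemma rot_comp: "rot p a \<circ> rot p b = rot p (a + b)"
  by (auto simp: rot_rot)

lemma rot_cong_mod: "a mod p = b mod p \<Longrightarrow> rot p a = rot p b"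
proof
  fix xs assume "a mod p = b mod p" then show "rot p a xs = rot p b xs"
    by (cases xs) (auto simp: mod_add_right_eq[of _ a p, symmetric] mod_add_right_eq[of _ b p, symmetric])
qed

lemma rot_eq_id: "a mod p = 0 \<Longrightarrow> rot p a = id"
proof
  fix xs assume "a mod p = 0" then show "rot p a xs = id xs"
    by (cases xs) (auto simp: mod_add_right_eq[of _ a p, symmetric])
qed

lemma bgen_comp: "bgen p u \<circ> bgen p v = bgen p (\<lambda>i. u i + v i)"
proof
  fix xs show "(bgen p u \<circ> bgen p v) xs = bgen p (\<lambda>i. u i + v i) xs"
    by (induction xs) (auto simp: rot_rot)
qed

lemma bgen_cong_mod: "(\<And>i. u i mod p = v i mod p) \<Longrightarrow> bgen p u = bgen p v"
proof
  fix xs assume "\<And>i. u i mod p = v i mod p" then show "bgen p u xs = bgen p v xs"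
    by (induction xs) (auto simp: rot_cong_mod[of "u _" p "v _"])
qed

lemma bgen_eq_id: "(\<And>i. u i mod p = 0) \<Longrightarrow> bgen p u = id"
proof
  fix xs assume "\<And>i. u i mod p = 0" then show "bgen p u xs = id xs"
    by (induction xs) (auto simp: rot_eq_id)
qed

lemma word_over_Nil [simp]: "word_over p []"
  by (simp add: word_over_def)

lemma word_over_Cons [simp]: "word_over p (y # v) \<longleftrightarrow> y < p \<and> word_over p v"
  by (simp add: word_over_def)

lemma mod_add_eq_0_iff:
  assumes "0 < (p::nat)" "y < p"
  shows "(y + c) mod p = 0 \<longleftrightarrow> y = (p - c mod p) mod p"
proof -
  let ?c = "c mod p"
  have c: "?c < p" using assms by simp
  have e: "(y + c) mod p = (y + ?c) mod p" by (simp add: mod_add_right_eq)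
  show ?thesis
  proof (cases "?c = 0")
    case True then show ?thesis using e assms by simp
  next
    case False
    then have pc: "(p - ?c) mod p = p - ?c" using c by simp
    show ?thesis
    proof (cases "y + ?c < p")
      case True then show ?thesis using e pc False by auto
    next
      case False
      have "y + ?c - p < p" using c assms by arith
      then have "(y + ?c) mod p = y + ?c - p" using False by (simp add: le_mod_geq)
      then show ?thesis using e pc False c assms by auto
    qed
  qed
qed

lemma sum_lessThan_mod_delta:
  assumes "0 < (p::nat)"
  shows "(\<Sum>y<p. if (y + c) mod p = 0 then f y else 0) = f ((p - c mod p) mod p)"
proof -
  have "(\<Sum>y<p. if (y + c) mod p = 0 then f y else 0)
      = (\<Sum>y<p. if y = (p - c mod p) mod p then f y else 0)"
    by (rule sum.cong) (auto simp: mod_add_eq_0_iff[OF assms])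
  also have "\<dots> = f ((p - c mod p) mod p)"
    using assms by (simp add: sum.delta)
  finally show ?thesis .
qed

lemma mod_diff_eq_add:
  assumes "y < (p::nat)" "(y + c) mod p = 0"
  shows "(x + p - y) mod p = (x + c) mod p"
proof -
  have "(x + p - y) mod p = ((x + p - y) + (y + c) mod p) mod p" using assms by simp
  also have "\<dots> = ((x + p - y) + (y + c)) mod p" by (simp add: mod_add_right_eq)
  also have "(x + p - y) + (y + c) = (x + c) + p" using assms by simp
  finally show ?thesis by simp
qed

datatype letter = Apow nat | Bpow "nat \<Rightarrow> nat"

context
  fixes p r :: nat and E :: "nat \<Rightarrow> nat \<Rightarrow> nat"
begin

fun eval_letter :: "letter \<Rightarrow> nat list \<Rightarrow> nat list" where
  "eval_letter (Apow k) = rot p k"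
| "eval_letter (Bpow n) = bgen p (expvec p r E n)"

fun eval_word :: "letter list \<Rightarrow> nat list \<Rightarrow> nat list" where
  "eval_word [] = id"
| "eval_word (l # w) = eval_letter l \<circ> eval_word w"

lemma eval_word_append: "eval_word (xs @ ys) = eval_word xs \<circ> eval_word ys"
  by (induction xs) (auto simp: comp_assoc)

definition dot :: "(nat \<Rightarrow> nat) \<Rightarrow> nat \<Rightarrow> nat" where
  "dot N i = (\<Sum>j<r. N j * E j i)"

lemma expvec_eq_dot_mod: "expvec p r E n i = dot n i mod p"
  by (simp add: expvec_def dot_def)

lemma dot_add: "dot (\<lambda>j. n j + m j) i = dot n i + dot m i"
  by (simp add: dot_def sum.distrib algebra_simps)

lemma dot_cong_mod: "(\<forall>j<r. N j mod p = M j mod p) \<Longrightarrow> dot N i mod p = dot M i mod p"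
  unfolding dot_def
  by (subst (1 2) mod_sum_eq[symmetric])
     (auto intro!: arg_cong[where f="\<lambda>t. t mod p"] sum.cong
           simp: mod_mult_left_eq[of "N _", symmetric] mod_mult_left_eq[of "M _", symmetric])

lemma dot_mod_eq_0: "\<forall>j<r. N j mod p = 0 \<Longrightarrow> dot N i mod p = 0"
  using dot_cong_mod[of N "\<lambda>_. 0" i] by (simp add: dot_def)

lemma expvec_cong_mod: "(\<forall>j<r. N j mod p = M j mod p) \<Longrightarrow> expvec p r E N = expvec p r E M"
  using dot_cong_mod[of N M] by (simp add: expvec_eq_dot_mod fun_eq_iff)

lemma basis_matrix_kernel:
  assumes "0 < p" "basis_matrix p r E" "\<forall>i\<in>{1..p-1}. dot N i mod p = 0"
  shows "\<forall>j<r. N j mod p = 0"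
proof -
  define N' where "N' = (\<lambda>j. if j < r then N j mod p else 0)"
  have "N' \<in> coeffs p r" using assms(1) by (simp add: N'_def coeffs_def)
  moreover have "expvec p r E N' = expvec p r E N"
    by (rule expvec_cong_mod) (simp add: N'_def)
  moreover have "\<forall>i\<in>{1..p-1}. expvec p r E N i = 0"
    using assms(3) by (simp add: expvec_eq_dot_mod)
  ultimately have "\<forall>j<r. N' j = 0"
    using assms(2) by (auto simp: basis_matrix_def)
  then show ?thesis by (simp add: N'_def)
qed

fun inverse_letter :: "letter \<Rightarrow> letter" where
  "inverse_letter (Apow k) = Apow ((p - 1) * k)"
| "inverse_letter (Bpow n) = Bpow (\<lambda>j. (p - 1) * n j)"

lemma eval_inverse_letter_comp:
  assumes "0 < p"
  shows "eval_letter (inverse_letter l) \<circ> eval_letter l = id"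
    and "eval_letter l \<circ> eval_letter (inverse_letter l) = id"
proof -
  have p: "(p - 1) * m + m = p * m" for m using assms by (cases p) auto
  have "eval_letter (inverse_letter l) \<circ> eval_letter l = id"
  proof (cases l)
    case (Apow k)
    have "rot p ((p - 1) * k) \<circ> rot p k = id"
      unfolding rot_comp p by (simp add: rot_eq_id)
    then show ?thesis by (simp add: Apow)
  next
    case (Bpow n)
    have "(expvec p r E (\<lambda>j. (p - 1) * n j) i + expvec p r E n i) mod p = 0" for i
    proof -
      have "(expvec p r E (\<lambda>j. (p - 1) * n j) i + expvec p r E n i) mod p
          = ((p - 1) * dot n i + dot n i) mod p"
        by (simp add: expvec_eq_dot_mod dot_def sum_distrib_left mod_add_eq ac_simps)
      then show ?thesis unfolding p by simp
    qed
    then show ?thesis by (simp add: Bpow bgen_comp bgen_eq_id)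
  qed
  moreover have "eval_letter (inverse_letter l) \<circ> eval_letter l
      = eval_letter l \<circ> eval_letter (inverse_letter l)"
    by (cases l) (simp_all add: rot_comp bgen_comp add.commute)
  ultimately show "eval_letter (inverse_letter l) \<circ> eval_letter l = id"
    and "eval_letter l \<circ> eval_letter (inverse_letter l) = id" by simp_all
qed

definition inverse_word :: "letter list \<Rightarrow> letter list" where
  "inverse_word w = rev (map inverse_letter w)"

lemma inv_eval_word:
  assumes "0 < p"
  shows "inv (eval_word w) = eval_word (inverse_word w)"
proof (rule inv_unique_comp)
  show "eval_word (inverse_word w) \<circ> eval_word w = id"
  proof (induction w)
    case (Cons l w)
    have "eval_word (inverse_word (l # w)) \<circ> eval_word (l # w)
        = eval_word (inverse_word w) \<circ> (eval_letter (inverse_letter l) \<circ> eval_letter l) \<circ> eval_word w"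
      by (simp add: inverse_word_def eval_word_append comp_assoc)
    also have "\<dots> = id"
      by (simp only: eval_inverse_letter_comp(1)[OF assms] id_comp comp_id Cons.IH)
    finally show ?case .
  qed (simp add: inverse_word_def)
  show "eval_word w \<circ> eval_word (inverse_word w) = id"
  proof (induction w)
    case (Cons l w)
    have "eval_word (l # w) \<circ> eval_word (inverse_word (l # w))
        = eval_letter l \<circ> (eval_word w \<circ> eval_word (inverse_word w)) \<circ> eval_letter (inverse_letter l)"
      by (simp add: inverse_word_def eval_word_append comp_assoc)
    also have "\<dots> = id"
      by (simp only: eval_inverse_letter_comp(2)[OF assms] id_comp comp_id Cons.IH)
    finally show ?case .
  qed (simp add: inverse_word_def)
qed

lemma gen_group_eval_word:
  assumes "0 < p" "g \<in> gen_group ({rot p 1} \<union> Bset p r E)"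
  shows "\<exists>w. g = eval_word w"
  using assms(2)
proof (induction rule: gen_group.induct)
  case gen_id
  have "id = eval_word []" by simp
  then show ?case by blast
next
  case (gen_base s)
  then consider "s = eval_word [Apow 1]" | n where "s = eval_word [Bpow n]"
    by (auto simp: Bset_def)
  then show ?case by cases blast+
next
  case (gen_comp f g)
  then show ?case by (metis eval_word_append)
next
  case (gen_inv f)
  then show ?case using inv_eval_word[OF assms(1)] by blast
qed

fun a_exp :: "letter list \<Rightarrow> nat" where
  "a_exp [] = 0"
| "a_exp (Apow k # w) = k + a_exp w"
| "a_exp (Bpow n # w) = a_exp w"

text \<open>In the section at \<open>x\<close>, a letter \<open>b\<^sup>n\<close> of \<open>w\<close> acts at the first letter \<open>x + a_exp w'\<close>,
  where \<open>w'\<close> is the part of \<open>w\<close> to its right, which acts first.\<close>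

fun section_word :: "letter list \<Rightarrow> nat \<Rightarrow> letter list" where
  "section_word [] x = []"
| "section_word (Apow k # w) x = section_word w x"
| "section_word (Bpow n # w) x = (if (x + a_exp w) mod p = 0 then Bpow n
      else Apow (expvec p r E n ((x + a_exp w) mod p))) # section_word w x"

fun b_exp :: "letter list \<Rightarrow> nat \<Rightarrow> nat" where
  "b_exp [] = (\<lambda>_. 0)"
| "b_exp (Apow k # w) = b_exp w"
| "b_exp (Bpow n # w) = (\<lambda>j. n j + b_exp w j)"

fun b_count :: "letter list \<Rightarrow> nat" where
  "b_count [] = 0"
| "b_count (Apow k # w) = b_count w"
| "b_count (Bpow n # w) = Suc (b_count w)"

lemma eval_word_Nil [simp]: "eval_word w [] = []"
  by (induction w rule: b_count.induct) auto

lemma eval_word_Cons: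
  "x < p \<Longrightarrow> eval_word w (x # u) = ((x + a_exp w) mod p) # eval_word (section_word w x) u"
proof (induction w rule: b_count.induct)
  case (2 k w)
  have "((x + a_exp w) mod p + k) mod p = (x + a_exp (Apow k # w)) mod p"
    by (simp add: mod_add_left_eq) (simp add: algebra_simps)
  then show ?case using 2 by simp
qed auto

lemma eval_word_takeWhile:
  assumes "0 < p"
  shows "eval_word w u = eval_word w (takeWhile (\<lambda>x. x < p) u) @ dropWhile (\<lambda>x. x < p) u"
proof (induction u arbitrary: w)
  case (Cons x u)
  have "eval_word w (x # u) = x # u" if "\<not> x < p"
    using that assms by (induction w rule: b_count.induct) auto
  then show ?case using Cons.IH by (auto simp: eval_word_Cons)
qed simp

lemma eval_word_eqI:
  assumes "0 < p" "\<And>u. word_over p u \<Longrightarrow> eval_word w1 u = eval_word w2 u"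
  shows "eval_word w1 = eval_word w2"
proof
  fix u
  have "word_over p (takeWhile (\<lambda>x. x < p) u)"
    by (auto simp: word_over_def dest: set_takeWhileD)
  then show "eval_word w1 u = eval_word w2 u"
    using assms by (subst (1 2) eval_word_takeWhile) auto
qed

lemma length_section_word: "length (section_word w x) = b_count w"
  by (induction w rule: b_count.induct) auto

lemma b_count_le_length: "b_count w \<le> length w"
  by (induction w rule: b_count.induct) auto

lemma all_Bpow_if_b_count_eq_length: "b_count w = length w \<Longrightarrow> \<forall>l\<in>set w. \<exists>n. l = Bpow n"
proof (induction w rule: b_count.induct)
  case (2 k w) then show ?case using b_count_le_length[of w] by simp
qed auto

lemma b_exp_eq_0_if_b_count_eq_0: "b_count w = 0 \<Longrightarrow> b_exp w = (\<lambda>_. 0)"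
  by (induction w rule: b_count.induct) auto

lemma sum_b_count_section_word: "0 < p \<Longrightarrow> (\<Sum>y<p. b_count (section_word w y)) = b_count w"
proof (induction w rule: b_count.induct)
  case (3 n w)
  have "(\<Sum>y<p. b_count (section_word (Bpow n # w) y))
      = (\<Sum>y<p. (if (y + a_exp w) mod p = 0 then 1 else 0) + b_count (section_word w y))"
    by (rule sum.cong) auto
  then show ?case by (simp add: sum.distrib sum_lessThan_mod_delta[OF 3(2)] 3)
qed auto

lemma sum_b_exp_section_word: "0 < p \<Longrightarrow> (\<Sum>y<p. b_exp (section_word w y) j) = b_exp w j"
proof (induction w rule: b_count.induct)
  case (3 n w)
  have "(\<Sum>y<p. b_exp (section_word (Bpow n # w) y) j)
      = (\<Sum>y<p. (if (y + a_exp w) mod p = 0 then n j else 0) + b_exp (section_word w y) j)"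
    by (rule sum.cong) auto
  then show ?case by (simp add: sum.distrib sum_lessThan_mod_delta[OF 3(2)] 3)
qed auto

lemma b_exp_mod_eq_0_if_sections:
  assumes "0 < p" "\<And>y. y < p \<Longrightarrow> \<forall>j<r. b_exp (section_word w y) j mod p = 0"
  shows "\<forall>j<r. b_exp w j mod p = 0"
proof (intro allI impI)
  fix j assume "j < r"
  have "b_exp w j mod p = (\<Sum>y<p. b_exp (section_word w y) j mod p) mod p"
    using sum_b_exp_section_word[OF assms(1), of w j] by (simp add: mod_sum_eq)
  also have "\<dots> = 0" using assms(2) \<open>j < r\<close> by simp
  finally show "b_exp w j mod p = 0" .
qed

text \<open>A letter \<open>b\<^sup>n\<close> of \<open>w\<close> that survives as \<open>b\<^sup>n\<close> in the section at \<open>y\<close> becomes the power of \<open>a\<close>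
  with exponent \<open>n\<cdot>e\<^sub>x\<^sub>-\<^sub>y\<close> in the section at \<open>x \<noteq> y\<close>.\<close>

lemma a_exp_section_word:
  assumes p: "0 < p" and x: "x < p"
  shows "a_exp (section_word w x) mod p
    = (\<Sum>y<p. if y = x then 0 else dot (b_exp (section_word w y)) ((x + p - y) mod p)) mod p"
proof (induction w rule: b_count.induct)
  case 1
  then show ?case by (simp add: dot_def cong: if_cong)
next
  case (2 k w)
  then show ?case by (simp cong: if_cong)
next
  case (3 n w)
  let ?T = "\<lambda>w. \<Sum>y<p. if y = x then 0 else dot (b_exp (section_word w y)) ((x + p - y) mod p)"
  define c where "c = a_exp w"
  define y0 where "y0 = (p - c mod p) mod p"
  define H where "H = (if (x + c) mod p = 0 then 0 else expvec p r E n ((x + c) mod p))"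
  define H' where "H' = (if y0 = x then 0 else dot n ((x + p - y0) mod p))"
  have y0: "y0 < p" "(y0 + c) mod p = 0"
    using p mod_add_eq_0_iff[OF p, of y0 c] by (simp_all add: y0_def)
  have "dot (b_exp (section_word (Bpow n # w) y)) i
      = (if (y + c) mod p = 0 then dot n i else 0) + dot (b_exp (section_word w y)) i" for y i
    by (cases "(y + c) mod p = 0") (simp_all add: c_def dot_add)
  then have "?T (Bpow n # w)
      = (\<Sum>y<p. (if (y + c) mod p = 0 then (if y = x then 0 else dot n ((x + p - y) mod p)) else 0)
          + (if y = x then 0 else dot (b_exp (section_word w y)) ((x + p - y) mod p)))"
    by (intro sum.cong) (simp_all cong: if_cong)
  also have "\<dots> = H' + ?T w"
    by (simp only: sum.distrib sum_lessThan_mod_delta[OF p] H'_def y0_def)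
  finally have T: "?T (Bpow n # w) = H' + ?T w" .
  have "H' mod p = H mod p"
  proof (cases "y0 = x")
    case True
    then show ?thesis using mod_add_eq_0_iff[OF p x, of c] by (simp add: H_def H'_def y0_def)
  next
    case False
    then show ?thesis
      using mod_add_eq_0_iff[OF p x, of c] mod_diff_eq_add[OF y0, of x]
      by (simp add: H_def H'_def y0_def expvec_eq_dot_mod)
  qed
  moreover have "a_exp (section_word (Bpow n # w) x) = H + a_exp (section_word w x)"
    by (simp add: H_def c_def)
  ultimately have "a_exp (section_word (Bpow n # w) x) mod p = (H' + ?T w) mod p"
    using 3 by (metis mod_add_eq)
  then show ?case using T by simp
qed

lemma eval_word_all_Bpow:
  "\<forall>l\<in>set w. \<exists>n. l = Bpow n \<Longrightarrow> eval_word w = bgen p (dot (b_exp w))"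
proof (induction w)
  case Nil then show ?case by (simp add: dot_def bgen_eq_id)
next
  case (Cons l w)
  then obtain n where l: "l = Bpow n" by auto
  have "eval_word (l # w) = bgen p (\<lambda>i. expvec p r E n i + dot (b_exp w) i)"
    using Cons by (simp add: l bgen_comp)
  also have "\<dots> = bgen p (dot (b_exp (l # w)))"
    by (rule bgen_cong_mod) (simp add: l dot_add expvec_eq_dot_mod mod_add_left_eq)
  finally show ?case .
qed

definition rooted_word :: "letter list \<Rightarrow> bool" where
  "rooted_word w \<longleftrightarrow> (\<forall>x<p. \<forall>v. word_over p v \<longrightarrow> eval_word (section_word w x) v = v)"

lemma rooted_word_section_word:
  assumes "rooted_word w" "x < p"
  shows "rooted_word (section_word w x)"
  unfolding rooted_word_def
proof (intro allI impI)
  fix y v assume y: "y < p" and "word_over p v"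
  then have "eval_word (section_word w x) (y # v) = y # v"
    using assms by (simp add: rooted_word_def)
  then show "eval_word (section_word (section_word w x) y) v = v"
    using eval_word_Cons[OF y] by simp
qed

lemma b_exp_single_section:
  assumes p: "0 < p" and bm: "basis_matrix p r E" and rooted: "rooted_word w"
    and x: "x < p" "b_count (section_word w x) = b_count w"
  shows "\<forall>j<r. b_exp w j mod p = 0"
proof -
  define N where "N = b_exp (section_word w x)"
  have "\<forall>l\<in>set (section_word w x). \<exists>n. l = Bpow n"
    using x(2) by (intro all_Bpow_if_b_count_eq_length) (simp add: length_section_word)
  then have sec: "eval_word (section_word w x) = bgen p (dot N)"
    by (simp add: N_def eval_word_all_Bpow)
  have "dot N i mod p = 0" if "i \<in> {1..p-1}" for i
  proof -
    have i: "i < p" "i \<noteq> 0" using that p by auto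
    then have "bgen p (dot N) [i, 0] = [i, 0]"
      using rooted x(1) p by (simp add: rooted_word_def flip: sec)
    then show ?thesis using i p by simp
  qed
  then have N: "\<forall>j<r. N j mod p = 0" using basis_matrix_kernel[OF p bm] by blast
  have "(\<Sum>y\<in>{..<p} - {x}. b_count (section_word w y)) = 0"
    using sum_b_count_section_word[OF p, of w] x by (simp add: sum.remove)
  then have "(\<Sum>y\<in>{..<p} - {x}. b_exp (section_word w y) j) = 0" for j
    by (simp add: b_exp_eq_0_if_b_count_eq_0)
  moreover have "b_exp w j = N j + (\<Sum>y\<in>{..<p} - {x}. b_exp (section_word w y) j)" for j
    using sum_b_exp_section_word[OF p, of w j] x(1) by (simp add: sum.remove N_def)
  ultimately show ?thesis using N by simp
qed

text \<open>The number of \<open>b\<close>-letters drops when passing to a section unless all of them land in one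
  section, which is then a single \<open>b\<^sup>N\<close>.\<close>

lemma b_exp_rooted_word:
  assumes p: "0 < p" and bm: "basis_matrix p r E"
  shows "rooted_word w \<Longrightarrow> \<forall>j<r. b_exp w j mod p = 0"
proof (induction "b_count w" arbitrary: w rule: less_induct)
  case less
  show ?case
  proof (cases "\<exists>x<p. b_count (section_word w x) = b_count w")
    case True
    then show ?thesis using b_exp_single_section[OF p bm less.prems] by blast
  next
    case False
    show ?thesis
    proof (rule b_exp_mod_eq_0_if_sections[OF p])
      fix y assume y: "y < p"
      have "b_count (section_word w y) < b_count w"
        using False y b_count_le_length[of "section_word w y"] length_section_word[of w y]
        by (metis le_neq_implies_less)
      then show "\<forall>j<r. b_exp (section_word w y) j mod p = 0"
        using less.hyps rooted_word_section_word[OF less.prems y] by blast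
    qed
  qed
qed

lemma directed0_a_exp:
  assumes "0 < p" "directed0 p (eval_word w)" shows "a_exp w mod p = 0"
proof -
  have "eval_word w (replicate 1 0) = replicate 1 0" using assms(2) by (simp only: directed0_def)
  then show ?thesis using eval_word_Cons[OF assms(1), of w "[]"] by simp
qed

lemma tree_edge_Cons_0:
  assumes "tree_edge p (0 # v) (replicate n 0)" "0 < p"
  shows "\<exists>m. tree_edge p v (replicate m 0)"
proof (cases n)
  case 0
  then have "tree_edge p v (replicate 1 0)" using assms by (auto simp: tree_edge_def)
  then show ?thesis by blast
next
  case (Suc m)
  then show ?thesis using assms(1) by (auto simp: tree_edge_def)
qed

lemma not_tree_edge_off_ray:
  assumes "x \<noteq> 0" shows "\<not> tree_edge p (x # y # t) (replicate n 0)"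
  using assms by (cases n) (auto simp: tree_edge_def Cons_replicate_eq)

lemma directed0_section_word_0:
  assumes p: "0 < p" and d: "directed0 p (eval_word w)"
  shows "directed0 p (eval_word (section_word w 0))"
proof -
  have c0: "eval_word w (0 # u) = 0 # eval_word (section_word w 0) u" for u
    using eval_word_Cons[OF p, of w u] directed0_a_exp[OF p d] by simp
  have "eval_word (section_word w 0) (replicate n 0) = replicate n 0" for n
  proof -
    have "eval_word w (replicate (Suc n) 0) = replicate (Suc n) 0"
      using d by (simp only: directed0_def)
    then show ?thesis using c0 by simp
  qed
  moreover have "trivial_label p (eval_word (section_word w 0)) v"
    if "word_over p v" "\<not> (\<exists>n. tree_edge p v (replicate n 0))" for v
  proof -
    have "\<not> (\<exists>n. tree_edge p (0 # v) (replicate n 0))"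
      using that(2) tree_edge_Cons_0[OF _ p] by blast
    then have "trivial_label p (eval_word w) (0 # v)"
      using d that(1) p by (simp add: directed0_def)
    then show ?thesis using c0 by (simp add: trivial_label_def)
  qed
  ultimately show ?thesis by (simp add: directed0_def)
qed

lemma directed0_rooted_section_word:
  assumes p: "0 < p" and d: "directed0 p (eval_word w)" and x: "x < p" "x \<noteq> 0"
  shows "rooted_word (section_word w x)"
  unfolding rooted_word_def
proof (intro allI impI)
  fix y t assume y: "y < p" and "word_over p t"
  then show "eval_word (section_word (section_word w x) y) t = t"
  proof (induction t rule: rev_induct)
    case (snoc z t)
    have t: "word_over p t" "z < p" using snoc.prems(2) by (auto simp: word_over_def)
    have "trivial_label p (eval_word w) (x # y # t)"
      using d x y t not_tree_edge_off_ray[OF x(2)] by (simp add: directed0_def)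
    then have "eval_word w (x # y # t @ [z]) = eval_word w (x # y # t) @ [z]"
      using t by (simp add: trivial_label_def)
    then show ?case using snoc.IH[OF y t(1)] by (simp add: eval_word_Cons x y)
  qed simp
qed

lemma directed0_b_exp_section_word:
  assumes p: "0 < p" and bm: "basis_matrix p r E" and d: "directed0 p (eval_word w)"
    and y: "y < p" "y \<noteq> 0"
  shows "\<forall>j<r. b_exp (section_word w y) j mod p = 0"
  using b_exp_rooted_word[OF p bm] directed0_rooted_section_word[OF p d y] by blast

lemma directed0_b_exp_section_word_0:
  assumes p: "0 < p" and bm: "basis_matrix p r E" and d: "directed0 p (eval_word w)"
  shows "\<forall>j<r. b_exp (section_word w 0) j mod p = b_exp w j mod p"
proof (intro allI impI)
  fix j assume j: "j < r"
  let ?S = "\<Sum>y\<in>{..<p} - {0}. b_exp (section_word w y) j"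
  have S: "?S mod p = 0"
    using directed0_b_exp_section_word[OF p bm d] j by (subst mod_sum_eq[symmetric]) simp
  have "b_exp w j = b_exp (section_word w 0) j + ?S"
    using sum_b_exp_section_word[OF p, of w j] p by (simp add: sum.remove)
  then have "b_exp w j mod p = (b_exp (section_word w 0) j + ?S mod p) mod p"
    by (simp add: mod_add_right_eq)
  then show "b_exp (section_word w 0) j mod p = b_exp w j mod p" using S by simp
qed

lemma directed0_a_exp_section_word:
  assumes p: "0 < p" and bm: "basis_matrix p r E" and d: "directed0 p (eval_word w)"
    and x: "x < p" "x \<noteq> 0"
  shows "a_exp (section_word w x) mod p = expvec p r E (b_exp w) x"
proof -
  have "(if y = x then 0 else dot (b_exp (section_word w y)) ((x + p - y) mod p)) mod p
      = (if y = 0 then dot (b_exp (section_word w 0)) x mod p else 0)" if y: "y < p" for y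
  proof (cases "y = 0")
    case False
    then show ?thesis
      using dot_mod_eq_0 directed0_b_exp_section_word[OF p bm d y False] by simp
  qed (use x in simp)
  then have "a_exp (section_word w x) mod p
      = (\<Sum>y<p. if y = 0 then dot (b_exp (section_word w 0)) x mod p else 0) mod p"
    unfolding a_exp_section_word[OF p x(1)] by (subst mod_sum_eq[symmetric]) simp
  also have "\<dots> = dot (b_exp w) x mod p"
    using p dot_cong_mod[OF directed0_b_exp_section_word_0[OF p bm d]] by simp
  finally show ?thesis by (simp add: expvec_eq_dot_mod)
qed

lemma directed0_eval_word_eq_bgen:
  assumes p: "0 < p" and bm: "basis_matrix p r E"
  shows "word_over p u \<Longrightarrow> directed0 p (eval_word w)
    \<Longrightarrow> eval_word w u = bgen p (expvec p r E (b_exp w)) u"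
proof (induction u arbitrary: w)
  case (Cons x u)
  have x: "x < p" and u: "word_over p u" using Cons.prems(1) by auto
  note d = Cons.prems(2)
  have "(x + a_exp w) mod p = x"
    using directed0_a_exp[OF p d] x by (simp add: mod_add_right_eq[of x "a_exp w" p, symmetric])
  then have ew: "eval_word w (x # u) = x # eval_word (section_word w x) u"
    using eval_word_Cons[OF x] by simp
  show ?case
  proof (cases "x = 0")
    case True
    have "expvec p r E (b_exp (section_word w 0)) = expvec p r E (b_exp w)"
      by (rule expvec_cong_mod[OF directed0_b_exp_section_word_0[OF p bm d]])
    then show ?thesis
      using True ew Cons.IH[OF u directed0_section_word_0[OF p d]] by simp
  next
    case False
    let ?W = "section_word w x"
    have "eval_word ?W u = rot p (a_exp ?W) u"
    proof (cases u)
      case (Cons y t)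
      then show ?thesis
        using u eval_word_Cons directed0_rooted_section_word[OF p d x False]
        by (simp add: rooted_word_def)
    qed simp
    moreover have "rot p (a_exp ?W) = rot p (expvec p r E (b_exp w) x)"
      using directed0_a_exp_section_word[OF p bm d x False]
      by (intro rot_cong_mod) (simp add: expvec_eq_dot_mod)
    ultimately show ?thesis using ew False x by simp
  qed
qed simp

end

theorem mainTheorem14:
  fixes p r :: nat and Emat :: "nat \<Rightarrow> nat \<Rightarrow> nat" and g :: "nat list \<Rightarrow> nat list"
  assumes "prime p" and "odd p"
    and "r \<ge> 1" and "basis_matrix p r Emat"
    and "rowspace p r Emat \<noteq> constspace p"
    and "g \<in> GE p r Emat"
    and "directed0 p g"
  shows "g \<in> Bset p r Emat"
proof -
  have p: "0 < p" using \<open>prime p\<close> prime_gt_0_nat by blast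
  obtain w where w: "g = eval_word p r Emat w"
    using gen_group_eval_word[OF p] \<open>g \<in> GE p r Emat\<close> unfolding GE_def by blast
  define N where "N = (\<lambda>j. if j < r then b_exp w j mod p else 0)"
  have "eval_word p r Emat w = eval_word p r Emat [Bpow (b_exp w)]"
    using directed0_eval_word_eq_bgen[OF p \<open>basis_matrix p r Emat\<close>] \<open>directed0 p g\<close> w
    by (intro eval_word_eqI[OF p]) simp
  then have "g = bgen p (expvec p r Emat (b_exp w))" using w by simp
  also have "\<dots> = bgen p (expvec p r Emat N)"
    by (rule arg_cong[where f="bgen p"], rule expvec_cong_mod) (simp add: N_def)
  finally show ?thesis using p by (auto simp: Bset_def coeffs_def N_def)
qed

end
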